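(* Let $r_0>0$ be such that for every $0\le r\le r_0$ and every $\beta\ge0$ one has $\int_0^\beta (r^2+2\sin^2y)^{1/2}\bigl(\frac34-\sin^2y\bigr)dy\ge0$. For $r>0$ and $w,z\in\mathbb R$ define \begin{align*} G_0(r,w)&=\int_0^w\Bigl(1+\frac{2\sin^2(ry)}{r^2}\Bigr)^{1/2}\frac{2\sin^2(ry)}{r^2}\,dy,\\ G_1(r,z)&=\frac32\int_0^z G_0(r,w)\Bigl(1+\frac{2\sin^2(rw)}{r^2}\Bigr)^{1/2}dw,\\ G_2(r,w)&=\int_0^w\Bigl(1+\frac{2\sin^2(ry)}{r^2}\Bigr)^{1/2}dy. \end{align*} Then for every $0<r\le r_0$ and every $z\in\mathbb R$, \[ |G_1(r,z)|\le\frac94\cdot\frac12\cdot\frac{\bigl(G_2(r,z)\bigr)^2}{r^2}. \] *)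

theory Defs
  imports "HOL-Analysis.Analysis"
begin

text \<open>Oriented integrals \<open>\<integral>_0^w\<close> are rendered with the interval Lebesgue integral
  \<open>LBINT y=0..w\<close>, which equals minus the integral over [w,0] when w < 0.\<close>

definition G0 :: "real \<Rightarrow> real \<Rightarrow> real" where
  "G0 r w = (LBINT y=0..w. sqrt (1 + 2 * (sin (r * y))^2 / r^2) * (2 * (sin (r * y))^2 / r^2))"

definition G1 :: "real \<Rightarrow> real \<Rightarrow> real" where
  "G1 r z = 3/2 * (LBINT w=0..z. G0 r w * sqrt (1 + 2 * (sin (r * w))^2 / r^2))"

definition G2 :: "real \<Rightarrow> real \<Rightarrow> real" where
  "G2 r w = (LBINT y=0..w. sqrt (1 + 2 * (sin (r * y))^2 / r^2))"

end

theory Submission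
  imports Defs
begin

text \<open>All three functions are antiderivatives, so everything reduces to sign information on
  derivatives. With \<open>s = sin (r y)\<close> and \<open>\<sigma> = sqrt (1 + 2 s\<^sup>2 / r\<^sup>2)\<close>, the derivative of
  \<open>3/(2 r\<^sup>2) G2 - G0\<close> is \<open>\<sigma> (3 - 4 s\<^sup>2) / (2 r\<^sup>2)\<close>, a rescaled copy of the integrand of the
  hypothesis; hence \<open>G0 \<le> 3/(2 r\<^sup>2) G2\<close> on \<open>[0, \<infinity>)\<close>. This makes the derivative
  \<open>9/(4 r\<^sup>2) G2 \<sigma> - 3/2 G0 \<sigma>\<close> of the right-hand side minus \<open>G1\<close> nonnegative, while \<open>G1 \<ge> 0\<close>
  because \<open>G0 \<ge> 0\<close>. Negative \<open>z\<close> follow by symmetry: \<open>G0\<close>, \<open>G2\<close> are odd and \<open>G1\<close> is even.\<close>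

lemma has_real_derivative_interval_integral_from_0:
  fixes f :: "real \<Rightarrow> real"
  assumes "continuous_on UNIV f"
  shows "((\<lambda>u. LBINT y=0..u. f y) has_real_derivative f x) (at x)"
proof -
  define a where "a = -\<bar>x\<bar> - 1"
  define b where "b = \<bar>x\<bar> + 1"
  have "((\<lambda>u. LBINT y=0..u. f y) has_vector_derivative (f x)) (at x within {a..b})"
    using interval_integral_FTC2[of a 0 b f x] continuous_on_subset[OF assms, of "{a..b}"]
    by (auto simp: a_def b_def zero_ereal_def[symmetric])
  moreover have "at x within {a..b} = at x"
    by (rule at_within_interior) (auto simp: a_def b_def)
  ultimately show ?thesis
    by (simp add: has_real_derivative_iff_has_vector_derivative)
qed

lemma odd_if_even_derivative:
  fixes F f :: "real \<Rightarrow> real"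
  assumes deriv: "\<And>x. (F has_real_derivative f x) (at x)"
    and even: "\<And>x. f (-x) = f x" and "F 0 = 0"
  shows "F (-x) = - F x"
proof -
  have "((\<lambda>x. F (-x) + F x) has_real_derivative 0) (at x)" for x
  proof -
    have "((\<lambda>x. F (-x)) has_real_derivative f (-x) * (-1)) (at x)"
      by (rule DERIV_chain2[OF deriv]) (auto intro!: derivative_eq_intros)
    from DERIV_add[OF this deriv[of x]] show ?thesis
      using even[of x] by simp
  qed
  with DERIV_isconst_all[of "\<lambda>x. F (-x) + F x" x 0] \<open>F 0 = 0\<close> show ?thesis
    by simp
qed

lemma even_if_odd_derivative:
  fixes F f :: "real \<Rightarrow> real"
  assumes deriv: "\<And>x. (F has_real_derivative f x) (at x)"
    and odd: "\<And>x. f (-x) = - f x"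
  shows "F (-x) = F x"
proof -
  have "((\<lambda>x. F (-x) - F x) has_real_derivative 0) (at x)" for x
  proof -
    have "((\<lambda>x. F (-x)) has_real_derivative f (-x) * (-1)) (at x)"
      by (rule DERIV_chain2[OF deriv]) (auto intro!: derivative_eq_intros)
    from DERIV_diff[OF this deriv[of x]] show ?thesis
      using odd[of x] by simp
  qed
  with DERIV_isconst_all[of "\<lambda>x. F (-x) - F x" x 0] show ?thesis
    by simp
qed

definition speed :: "real \<Rightarrow> real \<Rightarrow> real" where
  "speed r y = sqrt (1 + 2 * (sin (r * y))^2 / r^2)"

lemma G0_def': "G0 r w = (LBINT y=0..w. speed r y * (2 * (sin (r * y))^2 / r^2))"
  by (simp add: G0_def speed_def)

lemma G1_def': "G1 r z = 3/2 * (LBINT w=0..z. G0 r w * speed r w)"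
  by (simp add: G1_def speed_def)

lemma G2_def': "G2 r w = (LBINT y=0..w. speed r y)"
  by (simp add: G2_def speed_def)

lemma G0_0 [simp]: "G0 r 0 = 0" and G1_0 [simp]: "G1 r 0 = 0" and G2_0 [simp]: "G2 r 0 = 0"
  by (simp_all add: G0_def G1_def G2_def zero_ereal_def[symmetric])

lemma speed_nonneg: "speed r y \<ge> 0"
  by (simp add: speed_def)

lemma speed_minus: "speed r (-y) = speed r y"
  by (simp add: speed_def)

lemma speed_eq:
  assumes "r > 0"
  shows "speed r y = sqrt (r^2 + 2 * (sin (r * y))^2) / r"
proof -
  have "1 + 2 * (sin (r * y))^2 / r^2 = (r^2 + 2 * (sin (r * y))^2) / r^2"
    using assms by (simp add: field_simps)
  then show ?thesis
    using assms by (simp add: speed_def real_sqrt_divide)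
qed

lemma continuous_on_speed: "continuous_on UNIV (speed r)"
  unfolding speed_def divide_inverse by (intro continuous_intros)

lemma G0_has_derivative:
  "(G0 r has_real_derivative speed r x * (2 * (sin (r * x))^2 / r^2)) (at x)"
  unfolding G0_def'
  by (rule has_real_derivative_interval_integral_from_0)
     (unfold divide_inverse, intro continuous_intros continuous_on_speed)

lemma G2_has_derivative: "(G2 r has_real_derivative speed r x) (at x)"
  unfolding G2_def' by (rule has_real_derivative_interval_integral_from_0[OF continuous_on_speed])

lemma G1_has_derivative: "(G1 r has_real_derivative 3/2 * (G0 r x * speed r x)) (at x)"
proof -
  have "continuous_on UNIV (G0 r)"
    using DERIV_isCont[OF G0_has_derivative] by (auto intro: continuous_at_imp_continuous_on)
  then have "((\<lambda>z. LBINT w=0..z. G0 r w * speed r w) has_real_derivative G0 r x * speed r x) (at x)"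
    by (intro has_real_derivative_interval_integral_from_0 continuous_intros continuous_on_speed)
  then show ?thesis
    unfolding G1_def' by (rule DERIV_cmult)
qed

lemma G0_minus: "G0 r (-w) = - G0 r w"
  by (rule odd_if_even_derivative[OF G0_has_derivative]) (simp_all add: speed_minus)

lemma G2_minus: "G2 r (-w) = - G2 r w"
  by (rule odd_if_even_derivative[OF G2_has_derivative]) (simp_all add: speed_minus)

lemma G1_minus: "G1 r (-z) = G1 r z"
  by (rule even_if_odd_derivative[OF G1_has_derivative]) (simp add: G0_minus speed_minus)

lemma G0_nonneg: "w \<ge> 0 \<Longrightarrow> G0 r w \<ge> 0"
  using deriv_nonneg_imp_mono[OF G0_has_derivative, of 0 w] speed_nonneg by simp

lemma G1_nonneg: "z \<ge> 0 \<Longrightarrow> G1 r z \<ge> 0"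
  using deriv_nonneg_imp_mono[OF G1_has_derivative, of 0 z] G0_nonneg speed_nonneg by simp

lemma G2_G0_eq_rescaled_integral:
  assumes "r > 0"
  shows "3/(2*r^2) * G2 r w - G0 r w
           = 2/r^4 * (LBINT t=0..r*w. sqrt (r^2 + 2 * (sin t)^2) * (3/4 - (sin t)^2))"
    (is "?L w = 2/r^4 * ?H (r*w)")
proof -
  have "((\<lambda>w. ?L w - 2/r^4 * ?H (r*w)) has_real_derivative 0) (at x)" for x
  proof -
    have "(?H has_real_derivative sqrt (r^2 + 2 * (sin t)^2) * (3/4 - (sin t)^2)) (at t)" for t
      by (rule has_real_derivative_interval_integral_from_0) (intro continuous_intros)
    then have "((\<lambda>w. ?H (r*w)) has_real_derivative
                 sqrt (r^2 + 2 * (sin (r*x))^2) * (3/4 - (sin (r*x))^2) * r) (at x)"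
      by (rule DERIV_chain2) (auto intro!: derivative_eq_intros)
    then have "((\<lambda>w. ?L w - 2/r^4 * ?H (r*w)) has_real_derivative
        3/(2*r^2) * speed r x - speed r x * (2 * (sin (r * x))^2 / r^2)
          - 2/r^4 * (sqrt (r^2 + 2 * (sin (r*x))^2) * (3/4 - (sin (r*x))^2) * r)) (at x)"
      by (intro DERIV_diff DERIV_cmult G2_has_derivative G0_has_derivative)
    moreover have "3/(2*r^2) * speed r x - speed r x * (2 * (sin (r * x))^2 / r^2)
          - 2/r^4 * (sqrt (r^2 + 2 * (sin (r*x))^2) * (3/4 - (sin (r*x))^2) * r) = 0"
      using assms by (simp add: speed_eq field_simps power2_eq_square power4_eq_xxxx)
    ultimately show ?thesis
      by simp
  qed
  with DERIV_isconst_all[of "\<lambda>w. ?L w - 2/r^4 * ?H (r*w)" w 0] show ?thesis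
    by (simp add: zero_ereal_def[symmetric])
qed

lemma G0_le_G2:
  assumes "r > 0" and "w \<ge> 0"
    and "\<forall>\<beta>\<ge>0. (LBINT t=0..\<beta>. sqrt (r^2 + 2 * (sin t)^2) * (3/4 - (sin t)^2)) \<ge> 0"
  shows "G0 r w \<le> 3/(2*r^2) * G2 r w"
proof -
  have "0 \<le> 2/r^4 * (LBINT t=0..r*w. sqrt (r^2 + 2 * (sin t)^2) * (3/4 - (sin t)^2))"
    using assms by simp
  then show ?thesis
    using G2_G0_eq_rescaled_integral[OF \<open>r > 0\<close>, of w] by linarith
qed

lemma G1_le_G2_squared:
  assumes "r > 0" and "z \<ge> 0"
    and "\<forall>\<beta>\<ge>0. (LBINT t=0..\<beta>. sqrt (r^2 + 2 * (sin t)^2) * (3/4 - (sin t)^2)) \<ge> 0"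
  shows "G1 r z \<le> 9/8 * (G2 r z)^2 / r^2"
proof -
  define D where "D z = 9/8/r^2 * (G2 r z)^2 - G1 r z" for z
  have "(D has_real_derivative
          speed r x * (3/2 * (3/(2*r^2) * G2 r x - G0 r x))) (at x)" for x
  proof -
    have "((\<lambda>z. (G2 r z)^2) has_real_derivative 2 * G2 r x * speed r x) (at x)"
      using DERIV_power[OF G2_has_derivative[of r x], of 2] by (simp add: ac_simps)
    from DERIV_diff[OF DERIV_cmult[OF this, of "9/8/r^2"] G1_has_derivative[of r x]]
    show ?thesis
      unfolding D_def by (simp add: field_simps)
  qed
  moreover have "speed r x * (3/2 * (3/(2*r^2) * G2 r x - G0 r x)) \<ge> 0" if "x \<in> {0..z}" for x
    using G0_le_G2[OF \<open>r > 0\<close> _ assms(3), of x] that speed_nonneg[of r x] by simp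
  ultimately have "D 0 \<le> D z"
    by (rule deriv_nonneg_imp_mono[OF _ _ \<open>z \<ge> 0\<close>])
  then show ?thesis
    by (simp add: D_def field_simps)
qed

theorem corollary1:
  fixes r0 :: real
  assumes "r0 > 0"
    and "\<forall>r. 0 \<le> r \<and> r \<le> r0 \<longrightarrow> (\<forall>\<beta>\<ge>0.
           (LBINT y=0..\<beta>. sqrt (r^2 + 2 * (sin y)^2) * (3/4 - (sin y)^2)) \<ge> 0)"
  shows "\<forall>r z. 0 < r \<and> r \<le> r0 \<longrightarrow>
           \<bar>G1 r z\<bar> \<le> 9/4 * (1/2) * (G2 r z)^2 / r^2"
proof (intro allI impI)
  fix r z :: real
  assume r: "0 < r \<and> r \<le> r0"
  then have hyp: "\<forall>\<beta>\<ge>0. (LBINT y=0..\<beta>. sqrt (r^2 + 2 * (sin y)^2) * (3/4 - (sin y)^2)) \<ge> 0"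
    using assms(2) by simp
  have "\<bar>G1 r \<bar>z\<bar>\<bar> \<le> 9/8 * (G2 r \<bar>z\<bar>)^2 / r^2"
    using G1_nonneg[of "\<bar>z\<bar>" r] G1_le_G2_squared[of r "\<bar>z\<bar>"] r hyp by simp
  moreover have "G1 r \<bar>z\<bar> = G1 r z" and "(G2 r \<bar>z\<bar>)^2 = (G2 r z)^2"
    by (cases "z \<ge> 0"; simp add: G1_minus G2_minus)+
  ultimately show "\<bar>G1 r z\<bar> \<le> 9/4 * (1/2) * (G2 r z)^2 / r^2"
    by simp
qed

end
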